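(* Let $\bar\delta,\underline\delta\ge1$ be integers, $\pi$ the switching policy $(\bar\delta,\underline\delta)$, and $N>\max\{\bar\delta,\underline\delta\}$. Let $\nu_{i,j,\delta}$ be the stationary distribution of $\{S_t\}$ under $\pi$ in the original (untruncated) system, and $\nu_{i,j,\delta}(N)$ that of the truncated chain under $\pi$. Then $\nu_{i,j,\delta}(N)=\nu_{i,j,\delta}$ for all $(i,j,\delta)\in\mathcal S_N\setminus\{(1,0,N),(0,1,N)\}$, and $$\nu_{1,0,N}(N)=\frac{\bar qp_f}{1-\bar qp_f}\nu_{1,0,N-1},\qquad \nu_{0,1,N}(N)=\frac{\bar pp_f}{1-\bar pp_f}\nu_{0,1,N-1}.$$ Moreover, $\mathcal L(\pi,N)=\mathcal L(\pi)-\sigma(\pi,N)$, where $$\sigma(\pi,N)=\frac{\beta\nu_{0,0,0}\,p\,\bar q^{N}p_f^{N-\bar\delta+1}}{(1-\bar qp_f)^2}+\frac{(1-\beta)\nu_{1,1,0}\,q\,\bar p^{N}p_f^{N-\underline\delta+1}}{(1-\bar pp_f)^2}.$$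
   Context: Fix $p,q\in(0,1)$, $\bar p=1-p$, $\bar q=1-q$. The source $\{X_t\}$ is a Markov chain on $\{0,1\}$ with $\Pr[X_{t+1}=1\mid X_t=0]=p$, $\Pr[X_{t+1}=0\mid X_t=1]=q$; channel i.i.d. Bernoulli with success probability $p_s\in(0,1]$, independent of the source, $p_f=1-p_s$. Estimate dynamics: if $A_t=1$ and the transmission succeeds then $\hat X_{t+1}=X_{t+1}$, otherwise $\hat X_{t+1}=\hat X_t$. Original system: age $\Delta_{t+1}=\Delta_t+1$ if $X_{t+1}\ne\hat X_{t+1}$, else $0$; state $S_t=(X_t,\hat X_t,\Delta_t)\in\mathcal S=\{(0,0,0),(1,1,0)\}\cup\{(1,0,\delta),(0,1,\delta):\delta\ge1\}$, $S_1=(0,0,0)$. Truncated system with level $N$: age $\Delta_{t+1}=\min(\Delta_t+1,N)$ if $X_{t+1}\ne\hat X_{t+1}$, else $0$; state space $\mathcal S_N=\{(0,0,0),(1,1,0)\}\cup\{(1,0,\delta),(0,1,\delta):1\le\delta\le N\}$. In both, per-state cost $c(s)=\beta\delta$ for $s=(1,0,\delta)$, $(1-\beta)\delta$ for $s=(0,1,\delta)$, $0$ for synced states, $\beta\in[0,1]$; per-stage cost $\ell(s,a)=\mathbb E[c(S_{t+1})\mid S_t=s,A_t=a]+\lambda\mathbb 1\{a=1\}$, $\lambda\ge0$; $\mathcal L(\pi)$ and $\mathcal L(\pi,N)$ denote the average costs $\limsup_{T\to\infty}\frac1T\sum_{t=1}^T\mathbb E^\pi[\ell(S_t,A_t)\mid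 S_1=(0,0,0)]$ in the original and truncated systems, respectively. For integers $\bar\delta,\underline\delta\ge1$, the switching policy $(\bar\delta,\underline\delta)$ transmits iff $S_t=(1,0,\delta)$ with $\delta\ge\bar\delta$ or $S_t=(0,1,\delta)$ with $\delta\ge\underline\delta$. *)

theory Defs
  imports "HOL-Probability.Probability"
begin

type_synonym state = "nat \<times> nat \<times> nat"  \<comment> \<open>(X_t, Xhat_t, Delta_t)\<close>

text \<open>Parameters: age update g (Suc for the original
system, min (Suc d) N for the truncated one), p, q, success probability ps, action a
(True = transmit), current state.\<close>
definition step_kernel ::
  "(nat \<Rightarrow> nat) \<Rightarrow> real \<Rightarrow> real \<Rightarrow> real \<Rightarrow> bool \<Rightarrow> state \<Rightarrow> state pmf" where
  "step_kernel g p q ps a s =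
     (case s of (x, xh, d) \<Rightarrow>
        bind_pmf (bernoulli_pmf (if x = 0 then p else 1 - q)) (\<lambda>x1.
        bind_pmf (bernoulli_pmf ps) (\<lambda>succ.
          (let x' = (if x1 then 1 else 0 :: nat);
               xh' = (if a \<and> succ then x' else xh)
           in return_pmf (x', xh', if x' \<noteq> xh' then g d else 0)))))"

definition orig_kernel :: "real \<Rightarrow> real \<Rightarrow> real \<Rightarrow> bool \<Rightarrow> state \<Rightarrow> state pmf" where
  "orig_kernel p q ps = step_kernel Suc p q ps"

definition trunc_kernel :: "nat \<Rightarrow> real \<Rightarrow> real \<Rightarrow> real \<Rightarrow> bool \<Rightarrow> state \<Rightarrow> state pmf" where
  "trunc_kernel N p q ps = step_kernel (\<lambda>d. min (Suc d) N) p q ps"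

definition orig_states :: "state set" where
  "orig_states = {(0,0,0), (1,1,0)} \<union> {(1,0,d) | d. d \<ge> 1} \<union> {(0,1,d) | d. d \<ge> 1}"

definition trunc_states :: "nat \<Rightarrow> state set" where
  "trunc_states N = {(0,0,0), (1,1,0)} \<union> {(1,0,d) | d. 1 \<le> d \<and> d \<le> N}
                     \<union> {(0,1,d) | d. 1 \<le> d \<and> d \<le> N}"

definition switching_policy :: "nat \<Rightarrow> nat \<Rightarrow> state \<Rightarrow> bool" where
  "switching_policy dbar dund s =
     (case s of (x, xh, d) \<Rightarrow> (x = 1 \<and> xh = 0 \<and> d \<ge> dbar) \<or> (x = 0 \<and> xh = 1 \<and> d \<ge> dund))"

definition state_cost :: "real \<Rightarrow> state \<Rightarrow> real" where
  "state_cost \<beta> s = (case s of (x, xh, d) \<Rightarrow>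
      if x = 1 \<and> xh = 0 then \<beta> * real d
      else if x = 0 \<and> xh = 1 then (1 - \<beta>) * real d else 0)"

definition stage_cost ::
  "(bool \<Rightarrow> state \<Rightarrow> state pmf) \<Rightarrow> real \<Rightarrow> real \<Rightarrow> state \<Rightarrow> bool \<Rightarrow> real" where
  "stage_cost K \<beta> lam s a =
     measure_pmf.expectation (K a s) (state_cost \<beta>) + lam * (if a then 1 else 0)"

text \<open>Distribution of S_{t+1} under a stationary deterministic policy pol, S_1 = (0,0,0).\<close>
primrec state_dist ::
  "(bool \<Rightarrow> state \<Rightarrow> state pmf) \<Rightarrow> (state \<Rightarrow> bool) \<Rightarrow> nat \<Rightarrow> state pmf" where
  "state_dist K pol 0 = return_pmf (0,0,0)"
| "state_dist K pol (Suc t) = bind_pmf (state_dist K pol t) (\<lambda>s. K (pol s) s)"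

definition avg_cost ::
  "(bool \<Rightarrow> state \<Rightarrow> state pmf) \<Rightarrow> real \<Rightarrow> real \<Rightarrow> (state \<Rightarrow> bool) \<Rightarrow> ereal" where
  "avg_cost K \<beta> lam pol = limsup (\<lambda>T. ereal ((1 / real T) *
      (\<Sum>t<T. measure_pmf.expectation (state_dist K pol t) (\<lambda>s. stage_cost K \<beta> lam s (pol s)))))"

definition stationary_dist ::
  "(bool \<Rightarrow> state \<Rightarrow> state pmf) \<Rightarrow> (state \<Rightarrow> bool) \<Rightarrow> state set \<Rightarrow> state pmf \<Rightarrow> bool" where
  "stationary_dist K pol S \<nu> \<longleftrightarrow>
     set_pmf \<nu> \<subseteq> S \<and> bind_pmf \<nu> (\<lambda>s. K (pol s) s) = \<nu>"

end

theory Submission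
  imports Defs
begin

(*
  Above both thresholds the switching policy ignores the age, so capping ages at N maps the
  original chain onto the truncated one: a truncated step from the capped state is the image
  of an original step. Hence the image of nu under the cap is stationary for the truncated
  chain; since the Cesaro averages of the truncated chain converge to every stationary
  distribution, there is only one, so nu(N) is that image. Below N this changes nothing, and
  the balance equation at the capped top state gives its mass. The cost difference c(s) -
  c(cap s) is beta resp. 1 - beta times the excess age beyond N, whose expectation y obeys
  y' = rho (y + P[truncated chain at the top state]); its Cesaro mean therefore tends to
  rho / (1 - rho) times the stationary top mass, which is sigma(pi, N).
*)

section \<open>Cesaro averages and approximate linear systems\<close>

definition cesaro :: "(nat \<Rightarrow> real) \<Rightarrow> nat \<Rightarrow> real" where
  "cesaro u T = (\<Sum>t<T. u t) / real T"

lemma cesaro_add: "cesaro (\<lambda>t. f t + g t) T = cesaro f T + cesaro g T"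
  by (simp add: cesaro_def sum.distrib add_divide_distrib)

lemma cesaro_diff: "cesaro (\<lambda>t. f t - g t) T = cesaro f T - cesaro g T"
  by (simp add: cesaro_def sum_subtractf diff_divide_distrib)

lemma cesaro_mult_left: "cesaro (\<lambda>t. c * f t) T = c * cesaro f T"
  by (simp add: cesaro_def sum_distrib_left)

lemma cesaro_sum: "cesaro (\<lambda>t. \<Sum>i\<in>I. f i t) T = (\<Sum>i\<in>I. cesaro (f i) T)"
  by (simp add: cesaro_def sum.swap[of _ I] sum_divide_distrib)

lemma cesaro_const: "0 < T \<Longrightarrow> cesaro (\<lambda>_. c) T = c"
  by (simp add: cesaro_def)

lemma avg_cost_eq_limsup_cesaro:
  "avg_cost K \<beta> lam pol
     = limsup (\<lambda>T. ereal (cesaro (\<lambda>t. measure_pmf.expectation (state_dist K pol t)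
                                        (\<lambda>s. stage_cost K \<beta> lam s (pol s))) T))"
  unfolding avg_cost_def cesaro_def by simp

lemma cesaro_shift_tendsto_zero:
  assumes "\<And>t. \<bar>a t\<bar> \<le> B"
  shows "(\<lambda>T. cesaro (\<lambda>t. a (Suc t)) T - cesaro a T) \<longlonglongrightarrow> 0"
proof (rule Lim_null_comparison)
  have "cesaro (\<lambda>t. a (Suc t)) T - cesaro a T = (a T - a 0) / real T" for T
    using sum_lessThan_telescope[of a T] by (simp add: cesaro_def sum_subtractf flip: diff_divide_distrib)
  moreover have "\<bar>a T - a 0\<bar> / real T \<le> 2 * B / real T" for T
    using assms[of T] assms[of 0] by (intro divide_right_mono) auto
  ultimately show "\<forall>\<^sub>F T in sequentially. norm (cesaro (\<lambda>t. a (Suc t)) T - cesaro a T) \<le> 2 * B / real T"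
    by simp
  show "(\<lambda>T. 2 * B / real T) \<longlonglongrightarrow> 0"
    by (rule lim_const_over_n)
qed

lemma cesaro_linear_filter_tendsto:
  fixes y v :: "nat \<Rightarrow> real"
  assumes y0: "y 0 = 0" and y_Suc: "\<And>t. y (Suc t) = \<rho> * (y t + v t)"
    and v: "\<And>t. 0 \<le> v t" "\<And>t. v t \<le> 1" and \<rho>: "0 \<le> \<rho>" "\<rho> < 1"
    and lim: "cesaro v \<longlonglongrightarrow> L"
  shows "cesaro (\<lambda>t. y (Suc t)) \<longlonglongrightarrow> \<rho> / (1 - \<rho>) * L"
proof -
  have bound: "0 \<le> y t \<and> y t \<le> \<rho> / (1 - \<rho>)" for t
  proof (induction t)
    case 0
    then show ?case using y0 \<rho> by simp
  next
    case (Suc t)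
    have "y (Suc t) \<le> \<rho> * (\<rho> / (1 - \<rho>) + 1)"
      unfolding y_Suc using Suc v(2)[of t] \<rho> by (intro mult_left_mono) auto
    also have "\<dots> = \<rho> / (1 - \<rho>)"
      using \<rho> by (simp add: field_simps)
    finally show ?case
      using Suc v(1)[of t] \<rho> unfolding y_Suc by simp
  qed
  define \<delta> where "\<delta> T = cesaro (\<lambda>t. y (Suc t)) T - cesaro y T" for T
  have "\<delta> \<longlonglongrightarrow> 0"
    unfolding \<delta>_def using bound by (intro cesaro_shift_tendsto_zero[of _ "\<rho> / (1 - \<rho>)"]) auto
  then have "(\<lambda>T. (\<rho> * cesaro v T - \<rho> * \<delta> T) / (1 - \<rho>)) \<longlonglongrightarrow> (\<rho> * L - \<rho> * 0) / (1 - \<rho>)"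
    using \<rho> by (intro tendsto_intros lim) auto
  moreover have "cesaro (\<lambda>t. y (Suc t)) = (\<lambda>T. (\<rho> * cesaro v T - \<rho> * \<delta> T) / (1 - \<rho>))"
  proof (rule ext)
    fix T
    have "cesaro (\<lambda>t. y (Suc t)) T = \<rho> * cesaro y T + \<rho> * cesaro v T"
      unfolding y_Suc distrib_left cesaro_add cesaro_mult_left ..
    then show "cesaro (\<lambda>t. y (Suc t)) T = (\<rho> * cesaro v T - \<rho> * \<delta> T) / (1 - \<rho>)"
      using \<rho> unfolding \<delta>_def by (simp add: field_simps)
  qed
  ultimately show ?thesis
    by simp
qed

lemma tendsto_zero_along_chain:
  fixes y :: "nat \<Rightarrow> nat \<Rightarrow> real" and z :: "nat \<Rightarrow> real"
  assumes "2 \<le> N" and "\<rho> \<noteq> 1"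
    and first: "(\<lambda>T. y T 1 - a * z T) \<longlonglongrightarrow> 0"
    and step: "\<And>e. 1 \<le> e \<Longrightarrow> Suc e < N \<Longrightarrow> (\<lambda>T. y T (Suc e) - b e * y T e) \<longlonglongrightarrow> 0"
    and last: "(\<lambda>T. y T N - \<rho> * (y T (N - 1) + y T N)) \<longlonglongrightarrow> 0"
    and c_first: "c 1 = a"
    and c_step: "\<And>e. 1 \<le> e \<Longrightarrow> Suc e < N \<Longrightarrow> c (Suc e) = b e * c e"
    and c_last: "(1 - \<rho>) * c N = \<rho> * c (N - 1)"
    and d: "1 \<le> d" "d \<le> N"
  shows "(\<lambda>T. y T d - c d * z T) \<longlonglongrightarrow> 0"
proof -
  have below: "(\<lambda>T. y T d - c d * z T) \<longlonglongrightarrow> 0" if "1 \<le> d" "d < N" for d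
    using that
  proof (induction d rule: nat_induct_at_least)
    case base
    then show ?case using first c_first by simp
  next
    case (Suc e)
    have "(\<lambda>T. (y T (Suc e) - b e * y T e) + b e * (y T e - c e * z T)) \<longlonglongrightarrow> 0 + b e * 0"
      using Suc by (intro tendsto_intros step) auto
    moreover have "(y T (Suc e) - b e * y T e) + b e * (y T e - c e * z T) = y T (Suc e) - c (Suc e) * z T" for T
      using c_step[of e] Suc by (simp add: algebra_simps)
    ultimately show ?case by simp
  qed
  show ?thesis
  proof (cases "d < N")
    case True
    then show ?thesis using below d by simp
  next
    case False
    have "(\<lambda>T. ((y T N - \<rho> * (y T (N - 1) + y T N)) + \<rho> * (y T (N - 1) - c (N - 1) * z T)) / (1 - \<rho>))
        \<longlonglongrightarrow> (0 + \<rho> * 0) / (1 - \<rho>)"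
      using below[of "N - 1"] \<open>2 \<le> N\<close> \<open>\<rho> \<noteq> 1\<close> by (intro tendsto_intros last) auto
    moreover have "((y T N - \<rho> * (y T (N - 1) + y T N)) + \<rho> * (y T (N - 1) - c (N - 1) * z T)) / (1 - \<rho>)
        = y T N - c N * z T" for T
    proof -
      have "\<rho> * c (N - 1) * z T = (1 - \<rho>) * c N * z T"
        using c_last by simp
      then show ?thesis
        using \<open>\<rho> \<noteq> 1\<close> by (simp add: field_simps)
    qed
    ultimately show ?thesis
      using False d by simp
  qed
qed

lemma tendsto_zero_of_regular_system:
  fixes f g :: "nat \<Rightarrow> real"
  assumes "(\<lambda>T. a * f T + b * g T) \<longlonglongrightarrow> 0" and "(\<lambda>T. c * f T + d * g T) \<longlonglongrightarrow> 0"
    and det: "a * d - b * c \<noteq> 0"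
  shows "f \<longlonglongrightarrow> 0" "g \<longlonglongrightarrow> 0"
proof -
  have "(\<lambda>T. (d * (a * f T + b * g T) - b * (c * f T + d * g T)) / (a * d - b * c)) \<longlonglongrightarrow> (d * 0 - b * 0) / (a * d - b * c)"
    using assms by (intro tendsto_intros) auto
  moreover have "(d * (a * f T + b * g T) - b * (c * f T + d * g T)) / (a * d - b * c) = f T" for T
    using det by (simp add: field_simps)
  ultimately show "f \<longlonglongrightarrow> 0" by simp
  have "(\<lambda>T. (a * (c * f T + d * g T) - c * (a * f T + b * g T)) / (a * d - b * c)) \<longlonglongrightarrow> (a * 0 - c * 0) / (a * d - b * c)"
    using assms by (intro tendsto_intros) auto
  moreover have "(a * (c * f T + d * g T) - c * (a * f T + b * g T)) / (a * d - b * c) = g T" for T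
    using det by (simp add: field_simps)
  ultimately show "g \<longlonglongrightarrow> 0" by simp
qed

lemma sum_weighted_diff:
  fixes w y c :: "'a \<Rightarrow> real"
  shows "(\<Sum>d\<in>S. w d * (y d - c d * a)) = (\<Sum>d\<in>S. w d * y d) - (\<Sum>d\<in>S. w d * c d) * a"
  unfolding right_diff_distrib sum_subtractf sum_distrib_right by (simp add: mult.assoc)

lemma tail_weight_identity:
  fixes a b u :: real
  assumes "2 \<le> N" "k < N" "b * u \<noteq> 1"
  shows "(b * u) / (1 - b * u) * ((b * u) / (1 - b * u) * (a * b ^ (N - 2) * u ^ (N - 1 - k)))
       = a * b ^ N * u ^ (N - k + 1) / (1 - b * u)\<^sup>2"
proof -
  obtain m where m: "N = m + 2"
    using assms(1) by (metis add.commute le_Suc_ex)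
  obtain j where j: "N - k + 1 = j + 2" "N - 1 - k = j"
    using assms(2) by (intro that[of "N - 1 - k"]) auto
  have "1 - b * u \<noteq> 0"
    using assms(3) by simp
  then show ?thesis
    unfolding j unfolding m by (simp add: power_add field_simps power2_eq_square)
qed

definition step_result :: "(nat \<Rightarrow> nat) \<Rightarrow> bool \<Rightarrow> nat \<Rightarrow> nat \<Rightarrow> bool \<Rightarrow> bool \<Rightarrow> state" where
  "step_result g a xh d x1 succ =
     (let x' = (if x1 then 1 else 0 :: nat); xh' = (if a \<and> succ then x' else xh)
      in (x', xh', if x' \<noteq> xh' then g d else 0))"

lemma step_kernel_eq_bind:
  "step_kernel g p q ps a (x, xh, d) =
     bind_pmf (bernoulli_pmf (if x = 0 then p else 1 - q)) (\<lambda>x1.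
       bind_pmf (bernoulli_pmf ps) (\<lambda>succ. return_pmf (step_result g a xh d x1 succ)))"
  unfolding step_kernel_def step_result_def Let_def prod.case ..

lemma expectation_step_kernel:
  fixes h :: "state \<Rightarrow> real" and x :: nat
  assumes "0 \<le> p" "p \<le> 1" "0 \<le> q" "q \<le> 1" "0 \<le> ps" "ps \<le> 1"
  defines "\<pi> \<equiv> if x = 0 then p else 1 - q"
  shows "measure_pmf.expectation (step_kernel g p q ps a (x, xh, d)) h =
      \<pi> * (ps * h (step_result g a xh d True True) + (1 - ps) * h (step_result g a xh d True False))
    + (1 - \<pi>) * (ps * h (step_result g a xh d False True) + (1 - ps) * h (step_result g a xh d False False))"
proof -
  have "0 \<le> \<pi>" "\<pi> \<le> 1"
    using assms by (auto simp: \<pi>_def)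
  then show ?thesis
    unfolding step_kernel_eq_bind \<pi>_def[symmetric]
    by (subst pmf_expectation_bind[where A=UNIV], simp_all)+
       (simp add: UNIV_bool assms algebra_simps)
qed

lemma pmf_eq_expectation_indicator:
  "pmf M x = measure_pmf.expectation M (\<lambda>y. if y = x then 1 else 0 :: real)"
  by (subst integral_measure_pmf_real[where A="{x}"]) (auto split: if_splits)

lemma set_pmf_step_kernel:
  "set_pmf (step_kernel g p q ps a (x, xh, d)) \<subseteq> range (\<lambda>(x1, succ). step_result g a xh d x1 succ)"
  unfolding step_kernel_eq_bind by (auto intro: rev_image_eqI[of "(a1, b1)" for a1 b1])

lemma finite_set_pmf_step_kernel: "finite (set_pmf (step_kernel g p q ps a s))"
  by (cases s) (auto intro: finite_subset[OF set_pmf_step_kernel])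

lemma set_pmf_trunc_kernel:
  assumes "xh \<le> 1" "1 \<le> N"
  shows "set_pmf (trunc_kernel N p q ps a (x, xh, d)) \<subseteq> trunc_states N"
proof -
  have "step_result (\<lambda>d. min (Suc d) N) a xh d x1 succ \<in> trunc_states N" for x1 succ
    using assms unfolding step_result_def trunc_states_def by (cases xh) (auto simp: Let_def)
  then show ?thesis
    using set_pmf_step_kernel[of "\<lambda>d. min (Suc d) N" p q ps a x xh d]
    unfolding trunc_kernel_def by fastforce
qed

lemma set_pmf_orig_kernel:
  assumes "xh \<le> 1"
  shows "set_pmf (orig_kernel p q ps a (x, xh, d)) \<subseteq> orig_states"
proof -
  have "step_result Suc a xh d x1 succ \<in> orig_states" for x1 succ
    using assms unfolding step_result_def orig_states_def by (cases xh) (auto simp: Let_def)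
  then show ?thesis
    using set_pmf_step_kernel[of Suc p q ps a x xh d] unfolding orig_kernel_def by fastforce
qed

lemma trunc_states_eq:
  "trunc_states N = {(0,0,0), (1,1,0)} \<union> (\<lambda>d. (1,0,d)) ` {1..N} \<union> (\<lambda>d. (0,1,d)) ` {1..N}"
  unfolding trunc_states_def by auto

lemma finite_trunc_states: "finite (trunc_states N)"
  unfolding trunc_states_eq by simp

lemma sum_trunc_states:
  "(\<Sum>s\<in>trunc_states N. F s) =
     F (0,0,0) + F (1,1,0) + (\<Sum>d=1..N. F (1,0,d)) + (\<Sum>d=1..N. F (0,1,d))"
proof -
  have "inj_on (\<lambda>d. (1::nat, 0::nat, d)) {1..N}" "inj_on (\<lambda>d. (0::nat, 1::nat, d)) {1..N}"
    by (auto simp: inj_on_def)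
  then show ?thesis
    unfolding trunc_states_eq
    by (subst sum.union_disjoint, simp, simp, force)+ (simp add: sum.reindex)
qed

definition cap_age :: "nat \<Rightarrow> state \<Rightarrow> state" where
  "cap_age N s = (case s of (x, xh, d) \<Rightarrow> (x, xh, min d N))"

lemma cap_age_in_trunc_states: "s \<in> orig_states \<Longrightarrow> 1 \<le> N \<Longrightarrow> cap_age N s \<in> trunc_states N"
  unfolding orig_states_def trunc_states_def cap_age_def by auto

lemma switching_policy_cap_age:
  "max dbar dund < N \<Longrightarrow> switching_policy dbar dund (cap_age N s) = switching_policy dbar dund s"
  by (cases s) (auto simp: cap_age_def switching_policy_def)

text \<open>Lumpability: above both thresholds the policy ignores the age.\<close>
lemma trunc_kernel_cap_age:
  assumes "max dbar dund < N"
  shows "trunc_kernel N p q ps (switching_policy dbar dund (cap_age N s)) (cap_age N s)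
       = map_pmf (cap_age N) (orig_kernel p q ps (switching_policy dbar dund s) s)"
proof -
  obtain x xh d where s: "s = (x, xh, d)"
    by (cases s)
  show ?thesis
    unfolding switching_policy_cap_age[OF assms] unfolding s cap_age_def prod.case
    unfolding trunc_kernel_def orig_kernel_def step_kernel_eq_bind map_bind_pmf map_return_pmf
    by (intro bind_pmf_cong refl) (auto simp: step_result_def Let_def min_def)
qed

section \<open>Balance equations of the truncated chain\<close>

locale switching_system =
  fixes p q ps :: real and dbar dund N :: nat
  assumes p_bounds: "0 < p" "p < 1" and q_bounds: "0 < q" "q < 1" and ps_bounds: "0 < ps" "ps \<le> 1"
    and thresholds_pos: "1 \<le> dbar" "1 \<le> dund" and N_above: "max dbar dund < N"
begin

abbreviation pol :: "state \<Rightarrow> bool" where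
  "pol \<equiv> switching_policy dbar dund"

definition orig_step :: "state \<Rightarrow> state pmf" where
  "orig_step s = orig_kernel p q ps (pol s) s"

definition trunc_step :: "state \<Rightarrow> state pmf" where
  "trunc_step s = trunc_kernel N p q ps (pol s) s"

text \<open>Probability that the estimate is not refreshed in an unsynchronised state of age d.\<close>
definition tau10 :: "nat \<Rightarrow> real" where
  "tau10 d = (if dbar \<le> d then 1 - ps else 1)"

definition tau01 :: "nat \<Rightarrow> real" where
  "tau01 d = (if dund \<le> d then 1 - ps else 1)"

definition rho10 :: real where
  "rho10 = (1 - q) * (1 - ps)"

definition rho01 :: real where
  "rho01 = (1 - p) * (1 - ps)"

lemma N_ge: "2 \<le> N" "dbar < N" "dund < N"
  using N_above thresholds_pos by auto

lemma rho_bounds: "0 \<le> rho10" "rho10 < 1" "0 \<le> rho01" "rho01 < 1"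
proof -
  have "(1 - q) * (1 - ps) \<le> 1 - ps" "(1 - p) * (1 - ps) \<le> 1 - ps"
    using p_bounds q_bounds ps_bounds by (auto intro: mult_left_le_one_le)
  then show "0 \<le> rho10" "rho10 < 1" "0 \<le> rho01" "rho01 < 1"
    unfolding rho10_def rho01_def using p_bounds q_bounds ps_bounds by auto
qed

lemma expectation_step_kernel_cases:
  fixes h :: "state \<Rightarrow> real"
  shows "measure_pmf.expectation (step_kernel g p q ps False (0,0,d)) h = (1 - p) * h (0,0,0) + p * h (1,0,g d)"
    and "measure_pmf.expectation (step_kernel g p q ps False (1,1,d)) h = (1 - q) * h (1,1,0) + q * h (0,1,g d)"
    and "measure_pmf.expectation (step_kernel g p q ps (dbar \<le> d) (1,0,d)) h =
      (1 - q) * ((1 - tau10 d) * h (1,1,0) + tau10 d * h (1,0,g d)) + q * h (0,0,0)"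
    and "measure_pmf.expectation (step_kernel g p q ps (dund \<le> d) (0,1,d)) h =
      (1 - p) * ((1 - tau01 d) * h (0,0,0) + tau01 d * h (0,1,g d)) + p * h (1,1,0)"
  using p_bounds q_bounds ps_bounds
  by (simp_all add: expectation_step_kernel step_result_def tau10_def tau01_def algebra_simps)

lemma orig_step_eq:
  "orig_step (0,0,0) = step_kernel Suc p q ps False (0,0,0)"
  "orig_step (1,1,0) = step_kernel Suc p q ps False (1,1,0)"
  "orig_step (1,0,d) = step_kernel Suc p q ps (dbar \<le> d) (1,0,d)"
  "orig_step (0,1,d) = step_kernel Suc p q ps (dund \<le> d) (0,1,d)"
  by (simp_all add: orig_step_def orig_kernel_def switching_policy_def)

lemma trunc_step_eq:
  "trunc_step (0,0,0) = step_kernel (\<lambda>d. min (Suc d) N) p q ps False (0,0,0)"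
  "trunc_step (1,1,0) = step_kernel (\<lambda>d. min (Suc d) N) p q ps False (1,1,0)"
  "trunc_step (1,0,d) = step_kernel (\<lambda>d. min (Suc d) N) p q ps (dbar \<le> d) (1,0,d)"
  "trunc_step (0,1,d) = step_kernel (\<lambda>d. min (Suc d) N) p q ps (dund \<le> d) (0,1,d)"
  by (simp_all add: trunc_step_def trunc_kernel_def switching_policy_def)

lemma set_pmf_trunc_step:
  assumes "s \<in> trunc_states N"
  shows "set_pmf (trunc_step s) \<subseteq> trunc_states N"
proof -
  obtain x xh d where "s = (x, xh, d)" "xh \<le> 1"
    using assms unfolding trunc_states_def by auto
  then show ?thesis
    unfolding trunc_step_def using set_pmf_trunc_kernel[of xh N] N_ge by simp
qed

lemma set_pmf_orig_step:
  assumes "s \<in> orig_states"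
  shows "set_pmf (orig_step s) \<subseteq> orig_states"
proof -
  obtain x xh d where "s = (x, xh, d)" "xh \<le> 1"
    using assms unfolding orig_states_def by auto
  then show ?thesis
    unfolding orig_step_def by (auto intro!: set_pmf_orig_kernel)
qed

lemma set_pmf_bind_trunc_step:
  "set_pmf D \<subseteq> trunc_states N \<Longrightarrow> set_pmf (bind_pmf D trunc_step) \<subseteq> trunc_states N"
  using set_pmf_trunc_step unfolding set_bind_pmf by blast

lemma expectation_bind_trunc_step:
  fixes h :: "state \<Rightarrow> real"
  assumes D: "set_pmf D \<subseteq> trunc_states N"
  shows "measure_pmf.expectation (bind_pmf D trunc_step) h =
     pmf D (0,0,0) * ((1 - p) * h (0,0,0) + p * h (1,0,1))
   + pmf D (1,1,0) * ((1 - q) * h (1,1,0) + q * h (0,1,1))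
   + (\<Sum>d=1..N. pmf D (1,0,d) * ((1 - q) * ((1 - tau10 d) * h (1,1,0) + tau10 d * h (1,0,min (Suc d) N)) + q * h (0,0,0)))
   + (\<Sum>d=1..N. pmf D (0,1,d) * ((1 - p) * ((1 - tau01 d) * h (0,0,0) + tau01 d * h (0,1,min (Suc d) N)) + p * h (1,1,0)))"
  (is "_ = ?rhs")
proof -
  have "measure_pmf.expectation (bind_pmf D trunc_step) h
      = (\<Sum>s\<in>trunc_states N. pmf D s * measure_pmf.expectation (trunc_step s) h)"
    using D by (subst pmf_expectation_bind[where A="trunc_states N"])
      (auto simp: finite_trunc_states trunc_step_def trunc_kernel_def finite_set_pmf_step_kernel)
  also have "\<dots> = ?rhs"
    unfolding sum_trunc_states trunc_step_eq expectation_step_kernel_cases using N_ge by simp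
  finally show ?thesis .
qed

lemma pmf_bind_trunc_step:
  assumes D: "set_pmf D \<subseteq> trunc_states N"
  shows "pmf (bind_pmf D trunc_step) (1,0,1) = p * pmf D (0,0,0)"
    and "pmf (bind_pmf D trunc_step) (0,1,1) = q * pmf D (1,1,0)"
    and "1 \<le> e \<Longrightarrow> Suc e < N \<Longrightarrow>
      pmf (bind_pmf D trunc_step) (1,0,Suc e) = (1 - q) * tau10 e * pmf D (1,0,e)"
    and "1 \<le> e \<Longrightarrow> Suc e < N \<Longrightarrow>
      pmf (bind_pmf D trunc_step) (0,1,Suc e) = (1 - p) * tau01 e * pmf D (0,1,e)"
    and "pmf (bind_pmf D trunc_step) (1,0,N) = rho10 * (pmf D (1,0,N - 1) + pmf D (1,0,N))"
    and "pmf (bind_pmf D trunc_step) (0,1,N) = rho01 * (pmf D (0,1,N - 1) + pmf D (0,1,N))"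
proof -
  have min_one: "(min (Suc d) N = Suc 0) = False" if "1 \<le> d" for d
    using that N_ge by (auto simp: min_def)
  have min_inner: "(min (Suc d) N = Suc e) = (d = e)" if "Suc e < N" for d e
    using that by (auto simp: min_def)
  have min_top: "(min (Suc d) N = N) = (N - 1 \<le> d)" if "d \<le> N" for d
    using that by (auto simp: min_def)
  have sum_top: "(\<Sum>d=Suc 0..N. (if N - Suc 0 \<le> d then G d else 0)) = G (N - 1) + (G N :: real)" for G
  proof -
    obtain m where "N = Suc (Suc m)"
      using N_ge by (metis add_2_eq_Suc le_Suc_ex)
    then show ?thesis by (simp add: sum.cl_ivl_Suc)
  qed
  note pmf_step = pmf_eq_expectation_indicator[of "bind_pmf D trunc_step"] expectation_bind_trunc_step[OF D]
  show "pmf (bind_pmf D trunc_step) (1,0,1) = p * pmf D (0,0,0)"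
    "pmf (bind_pmf D trunc_step) (0,1,1) = q * pmf D (1,1,0)"
    unfolding pmf_step by (simp_all add: min_one)
  show "1 \<le> e \<Longrightarrow> Suc e < N \<Longrightarrow>
      pmf (bind_pmf D trunc_step) (1,0,Suc e) = (1 - q) * tau10 e * pmf D (1,0,e)"
    "1 \<le> e \<Longrightarrow> Suc e < N \<Longrightarrow>
      pmf (bind_pmf D trunc_step) (0,1,Suc e) = (1 - p) * tau01 e * pmf D (0,1,e)"
    unfolding pmf_step by (simp_all add: min_inner if_distrib[of "(*) _"] cong: if_cong)
  show "pmf (bind_pmf D trunc_step) (1,0,N) = rho10 * (pmf D (1,0,N - 1) + pmf D (1,0,N))"
    "pmf (bind_pmf D trunc_step) (0,1,N) = rho01 * (pmf D (0,1,N - 1) + pmf D (0,1,N))"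
    unfolding pmf_step using N_ge
    by (simp_all add: min_top if_distrib[of "(*) _"] sum_top tau10_def tau01_def rho10_def rho01_def
        algebra_simps cong: if_cong)
qed

lemma sum_pmf_trunc_states:
  assumes "set_pmf D \<subseteq> trunc_states N"
  shows "pmf D (0,0,0) + pmf D (1,1,0) + (\<Sum>d=1..N. pmf D (1,0,d)) + (\<Sum>d=1..N. pmf D (0,1,d)) = 1"
  using sum_pmf_eq_1[OF finite_trunc_states assms] by (simp add: sum_trunc_states)

definition est0_mass :: "state pmf \<Rightarrow> real" where
  "est0_mass D = pmf D (0,0,0) + (\<Sum>d=1..N. pmf D (1,0,d))"

lemma est0_mass_bounds:
  assumes "set_pmf D \<subseteq> trunc_states N"
  shows "\<bar>est0_mass D\<bar> \<le> 1"
proof -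
  have "0 \<le> pmf D (1,1,0) + (\<Sum>d=1..N. pmf D (0,1,d))" "0 \<le> est0_mass D"
    unfolding est0_mass_def by (auto intro!: add_nonneg_nonneg sum_nonneg)
  then show ?thesis
    using sum_pmf_trunc_states[OF assms] unfolding est0_mass_def by linarith
qed

text \<open>The estimate switches from 0 to 1 only by a refresh in some (1,0,d), and back only
  by a refresh in some (0,1,d).\<close>
lemma est0_mass_bind_trunc_step:
  assumes D: "set_pmf D \<subseteq> trunc_states N"
  shows "est0_mass (bind_pmf D trunc_step) = est0_mass D
     - (\<Sum>d=1..N. (1 - q) * (1 - tau10 d) * pmf D (1,0,d))
     + (\<Sum>d=1..N. (1 - p) * (1 - tau01 d) * pmf D (0,1,d))"
proof -
  define est0 :: "state \<Rightarrow> real" where "est0 s = (if fst (snd s) = 0 then 1 else 0)" for s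
  have "est0_mass M = measure_pmf.expectation M est0" if "set_pmf M \<subseteq> trunc_states N" for M
    by (subst integral_measure_pmf_real[where A="trunc_states N"])
      (use that finite_trunc_states in \<open>auto simp: sum_trunc_states est0_def est0_mass_def\<close>)
  then have "est0_mass (bind_pmf D trunc_step) = measure_pmf.expectation (bind_pmf D trunc_step) est0"
    using set_pmf_bind_trunc_step[OF D] by blast
  also have "\<dots> = pmf D (0,0,0) + (\<Sum>d=1..N. pmf D (1,0,d) * ((1 - q) * tau10 d + q))
      + (\<Sum>d=1..N. pmf D (0,1,d) * ((1 - p) * (1 - tau01 d)))"
    unfolding expectation_bind_trunc_step[OF D] by (simp add: est0_def algebra_simps)
  also have "(\<Sum>d=1..N. pmf D (1,0,d) * ((1 - q) * tau10 d + q))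
      = (\<Sum>d=1..N. pmf D (1,0,d)) - (\<Sum>d=1..N. (1 - q) * (1 - tau10 d) * pmf D (1,0,d))"
    by (simp add: sum_subtractf[symmetric] algebra_simps)
  also have "(\<Sum>d=1..N. pmf D (0,1,d) * ((1 - p) * (1 - tau01 d)))
      = (\<Sum>d=1..N. (1 - p) * (1 - tau01 d) * pmf D (0,1,d))"
    by (simp add: algebra_simps)
  finally show ?thesis
    by (simp add: est0_mass_def)
qed

text \<open>A stationary distribution of the truncated chain has mass weight10 d * mass(0,0,0) at
  (1,0,d) and weight01 d * mass(1,1,0) at (0,1,d); the truncated exponent d - dbar counts the
  ages at or above the threshold passed on the way.\<close>
definition weight10 :: "nat \<Rightarrow> real" where
  "weight10 d = (if d < N then p * (1 - q) ^ (d - 1) * (1 - ps) ^ (d - dbar)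
                 else rho10 / (1 - rho10) * (p * (1 - q) ^ (N - 2) * (1 - ps) ^ (N - 1 - dbar)))"

definition weight01 :: "nat \<Rightarrow> real" where
  "weight01 d = (if d < N then q * (1 - p) ^ (d - 1) * (1 - ps) ^ (d - dund)
                 else rho01 / (1 - rho01) * (q * (1 - p) ^ (N - 2) * (1 - ps) ^ (N - 1 - dund)))"

lemma weight_rec:
  shows "weight10 1 = p" and "weight01 1 = q"
    and "1 \<le> e \<Longrightarrow> Suc e < N \<Longrightarrow> weight10 (Suc e) = (1 - q) * tau10 e * weight10 e"
    and "1 \<le> e \<Longrightarrow> Suc e < N \<Longrightarrow> weight01 (Suc e) = (1 - p) * tau01 e * weight01 e"
    and "(1 - rho10) * weight10 N = rho10 * weight10 (N - 1)"
    and "(1 - rho01) * weight01 N = rho01 * weight01 (N - 1)"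
proof -
  have Suc_diff: "(1 - ps) ^ (Suc e - d) = (if d \<le> e then 1 - ps else 1) * (1 - ps) ^ (e - d)" for e d
    by (simp add: Suc_diff_le)
  have N_pred: "N - 1 - 1 = N - 2" "N - 1 < N"
    using N_ge by auto
  show "weight10 1 = p" "weight01 1 = q"
    using N_ge thresholds_pos by (simp_all add: weight10_def weight01_def)
  show "1 \<le> e \<Longrightarrow> Suc e < N \<Longrightarrow> weight10 (Suc e) = (1 - q) * tau10 e * weight10 e"
    "1 \<le> e \<Longrightarrow> Suc e < N \<Longrightarrow> weight01 (Suc e) = (1 - p) * tau01 e * weight01 e"
    by (cases e; simp add: weight10_def weight01_def tau10_def tau01_def Suc_diff)+
  show "(1 - rho10) * weight10 N = rho10 * weight10 (N - 1)"
    "(1 - rho01) * weight01 N = rho01 * weight01 (N - 1)"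
    using rho_bounds N_pred by (simp_all add: weight10_def weight01_def)
qed

lemma weight_nonneg: "0 \<le> weight10 d" "0 \<le> weight01 d"
  using rho_bounds p_bounds q_bounds ps_bounds unfolding weight10_def weight01_def by auto

definition sync10 :: real where
  "sync10 = (\<Sum>d=1..N. (1 - q) * (1 - tau10 d) * weight10 d)"

definition sync01 :: real where
  "sync01 = (\<Sum>d=1..N. (1 - p) * (1 - tau01 d) * weight01 d)"

lemma sync10_pos: "0 < sync10"
proof -
  have "0 \<le> (1 - q) * (1 - tau10 d) * weight10 d" for d
    using q_bounds ps_bounds weight_nonneg by (auto simp: tau10_def)
  moreover have "0 < (1 - q) * (1 - tau10 dbar) * weight10 dbar"
    using thresholds_pos N_ge p_bounds q_bounds ps_bounds unfolding tau10_def weight10_def by auto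
  ultimately show ?thesis
    unfolding sync10_def using thresholds_pos N_ge by (intro sum_pos2[of _ dbar]) auto
qed

lemma sync01_nonneg: "0 \<le> sync01"
  unfolding sync01_def using p_bounds ps_bounds weight_nonneg by (intro sum_nonneg) (auto simp: tau01_def)

section \<open>Uniqueness of the truncated stationary distribution\<close>

text \<open>Uniqueness for the balance equations of the truncated chain, in the asymptotic form needed
  for Cesaro averages: the chains through (1,0,d) and (0,1,d) express everything in terms of
  the two synchronised states, which are then pinned down by the flow and mass equations.\<close>
lemma approx_balance_tendsto_zero:
  fixes x :: "nat \<Rightarrow> state \<Rightarrow> real"
  assumes first10: "(\<lambda>T. x T (1,0,1) - p * x T (0,0,0)) \<longlonglongrightarrow> 0"
    and step10: "\<And>e. 1 \<le> e \<Longrightarrow> Suc e < N \<Longrightarrow>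
      (\<lambda>T. x T (1,0,Suc e) - (1 - q) * tau10 e * x T (1,0,e)) \<longlonglongrightarrow> 0"
    and top10: "(\<lambda>T. x T (1,0,N) - rho10 * (x T (1,0,N - 1) + x T (1,0,N))) \<longlonglongrightarrow> 0"
    and first01: "(\<lambda>T. x T (0,1,1) - q * x T (1,1,0)) \<longlonglongrightarrow> 0"
    and step01: "\<And>e. 1 \<le> e \<Longrightarrow> Suc e < N \<Longrightarrow>
      (\<lambda>T. x T (0,1,Suc e) - (1 - p) * tau01 e * x T (0,1,e)) \<longlonglongrightarrow> 0"
    and top01: "(\<lambda>T. x T (0,1,N) - rho01 * (x T (0,1,N - 1) + x T (0,1,N))) \<longlonglongrightarrow> 0"
    and flow: "(\<lambda>T. (\<Sum>d=1..N. (1 - q) * (1 - tau10 d) * x T (1,0,d))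
                   - (\<Sum>d=1..N. (1 - p) * (1 - tau01 d) * x T (0,1,d))) \<longlonglongrightarrow> 0"
    and mass: "(\<lambda>T. x T (0,0,0) + x T (1,1,0) + (\<Sum>d=1..N. x T (1,0,d)) + (\<Sum>d=1..N. x T (0,1,d)))
                \<longlonglongrightarrow> 0"
    and s: "s \<in> trunc_states N"
  shows "(\<lambda>T. x T s) \<longlonglongrightarrow> 0"
proof -
  have chain10: "(\<lambda>T. x T (1,0,d) - weight10 d * x T (0,0,0)) \<longlonglongrightarrow> 0" if "1 \<le> d" "d \<le> N" for d
    by (rule tendsto_zero_along_chain[where y="\<lambda>T d. x T (1,0,d)" and b="\<lambda>e. (1 - q) * tau10 e"])
      (use that N_ge rho_bounds weight_rec first10 step10 top10 in auto)
  have chain01: "(\<lambda>T. x T (0,1,d) - weight01 d * x T (1,1,0)) \<longlonglongrightarrow> 0" if "1 \<le> d" "d \<le> N" for d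
    by (rule tendsto_zero_along_chain[where y="\<lambda>T d. x T (0,1,d)" and b="\<lambda>e. (1 - p) * tau01 e"])
      (use that N_ge rho_bounds weight_rec first01 step01 top01 in auto)
  have weighted10: "(\<lambda>T. \<Sum>d=1..N. w d * (x T (1,0,d) - weight10 d * x T (0,0,0))) \<longlonglongrightarrow> 0" for w
    by (intro tendsto_null_sum tendsto_mult_right_zero chain10) auto
  have weighted01: "(\<lambda>T. \<Sum>d=1..N. w d * (x T (0,1,d) - weight01 d * x T (1,1,0))) \<longlonglongrightarrow> 0" for w
    by (intro tendsto_null_sum tendsto_mult_right_zero chain01) auto
  define P10 where "P10 = 1 + (\<Sum>d=1..N. weight10 d)"
  define P01 where "P01 = 1 + (\<Sum>d=1..N. weight01 d)"
  have "P10 \<ge> 1" "P01 \<ge> 1"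
    unfolding P10_def P01_def using weight_nonneg by (auto intro: sum_nonneg)
  have "(\<lambda>T. (x T (0,0,0) + x T (1,1,0) + (\<Sum>d=1..N. x T (1,0,d)) + (\<Sum>d=1..N. x T (0,1,d)))
      - (\<Sum>d=1..N. 1 * (x T (1,0,d) - weight10 d * x T (0,0,0)))
      - (\<Sum>d=1..N. 1 * (x T (0,1,d) - weight01 d * x T (1,1,0)))) \<longlonglongrightarrow> 0 - 0 - 0"
    by (intro tendsto_diff mass weighted10 weighted01)
  moreover have "(x T (0,0,0) + x T (1,1,0) + (\<Sum>d=1..N. x T (1,0,d)) + (\<Sum>d=1..N. x T (0,1,d)))
      - (\<Sum>d=1..N. 1 * (x T (1,0,d) - weight10 d * x T (0,0,0)))
      - (\<Sum>d=1..N. 1 * (x T (0,1,d) - weight01 d * x T (1,1,0)))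
      = P10 * x T (0,0,0) + P01 * x T (1,1,0)" for T
    unfolding sum_weighted_diff P10_def P01_def distrib_right by simp
  ultimately have mass': "(\<lambda>T. P10 * x T (0,0,0) + P01 * x T (1,1,0)) \<longlonglongrightarrow> 0"
    by simp
  have "(\<lambda>T. ((\<Sum>d=1..N. (1 - q) * (1 - tau10 d) * x T (1,0,d))
                 - (\<Sum>d=1..N. (1 - p) * (1 - tau01 d) * x T (0,1,d)))
      - (\<Sum>d=1..N. (1 - q) * (1 - tau10 d) * (x T (1,0,d) - weight10 d * x T (0,0,0)))
      + (\<Sum>d=1..N. (1 - p) * (1 - tau01 d) * (x T (0,1,d) - weight01 d * x T (1,1,0))))
      \<longlonglongrightarrow> 0 - 0 + 0"
    by (intro tendsto_add tendsto_diff flow weighted10 weighted01)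
  moreover have "((\<Sum>d=1..N. (1 - q) * (1 - tau10 d) * x T (1,0,d))
                 - (\<Sum>d=1..N. (1 - p) * (1 - tau01 d) * x T (0,1,d)))
      - (\<Sum>d=1..N. (1 - q) * (1 - tau10 d) * (x T (1,0,d) - weight10 d * x T (0,0,0)))
      + (\<Sum>d=1..N. (1 - p) * (1 - tau01 d) * (x T (0,1,d) - weight01 d * x T (1,1,0)))
      = sync10 * x T (0,0,0) + (- sync01) * x T (1,1,0)" for T
    unfolding sum_weighted_diff sync10_def sync01_def by linarith
  ultimately have flow': "(\<lambda>T. sync10 * x T (0,0,0) + (- sync01) * x T (1,1,0)) \<longlonglongrightarrow> 0"
    by simp
  have "0 \<le> P10 * sync01" "0 < P01 * sync10"
    using \<open>P10 \<ge> 1\<close> \<open>P01 \<ge> 1\<close> sync10_pos sync01_nonneg by simp_all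
  then have "P10 * (- sync01) - P01 * sync10 \<noteq> 0"
    by simp
  then have sync: "(\<lambda>T. x T (0,0,0)) \<longlonglongrightarrow> 0" "(\<lambda>T. x T (1,1,0)) \<longlonglongrightarrow> 0"
    using tendsto_zero_of_regular_system[OF mass' flow'] by auto
  have unsync: "(\<lambda>T. x T (1,0,d)) \<longlonglongrightarrow> 0" "(\<lambda>T. x T (0,1,d)) \<longlonglongrightarrow> 0" if "1 \<le> d" "d \<le> N" for d
  proof -
    have "(\<lambda>T. (x T (1,0,d) - weight10 d * x T (0,0,0)) + weight10 d * x T (0,0,0)) \<longlonglongrightarrow> 0 + weight10 d * 0"
      using that by (intro tendsto_add tendsto_mult chain10 sync tendsto_const)
    moreover have "(\<lambda>T. (x T (0,1,d) - weight01 d * x T (1,1,0)) + weight01 d * x T (1,1,0)) \<longlonglongrightarrow> 0 + weight01 d * 0"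
      using that by (intro tendsto_add tendsto_mult chain01 sync tendsto_const)
    ultimately show "(\<lambda>T. x T (1,0,d)) \<longlonglongrightarrow> 0" "(\<lambda>T. x T (0,1,d)) \<longlonglongrightarrow> 0"
      by simp_all
  qed
  show ?thesis
    using s sync unsync unfolding trunc_states_def by auto
qed

definition trunc_dist :: "nat \<Rightarrow> state pmf" where
  "trunc_dist t = state_dist (trunc_kernel N p q ps) pol t"

lemma trunc_dist_Suc: "trunc_dist (Suc t) = bind_pmf (trunc_dist t) trunc_step"
  by (simp add: trunc_dist_def trunc_step_def[abs_def])

lemma set_pmf_trunc_dist: "set_pmf (trunc_dist t) \<subseteq> trunc_states N"
proof (induction t)
  case 0
  then show ?case by (simp add: trunc_dist_def trunc_states_def)
next
  case (Suc t)
  then show ?case unfolding trunc_dist_Suc by (rule set_pmf_bind_trunc_step)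
qed

lemma cesaro_balance_deviation:
  assumes \<mu>: "set_pmf \<mu> \<subseteq> trunc_states N" "bind_pmf \<mu> trunc_step = \<mu>"
    and FG: "\<And>D. set_pmf D \<subseteq> trunc_states N \<Longrightarrow> F (bind_pmf D trunc_step) = G D"
    and bound: "\<And>D. set_pmf D \<subseteq> trunc_states N \<Longrightarrow> \<bar>F D\<bar> \<le> B"
  shows "(\<lambda>T. (cesaro (\<lambda>t. F (trunc_dist t)) T - F \<mu>) - (cesaro (\<lambda>t. G (trunc_dist t)) T - G \<mu>))
    \<longlonglongrightarrow> 0"
proof -
  have "G (trunc_dist t) = F (trunc_dist (Suc t))" for t
    using FG[OF set_pmf_trunc_dist] by (simp add: trunc_dist_Suc)
  moreover have "G \<mu> = F \<mu>"
    using FG[OF \<mu>(1)] \<mu>(2) by simp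
  moreover have "(\<lambda>T. - (cesaro (\<lambda>t. F (trunc_dist (Suc t))) T - cesaro (\<lambda>t. F (trunc_dist t)) T))
      \<longlonglongrightarrow> - 0"
    using bound[OF set_pmf_trunc_dist] by (intro tendsto_minus cesaro_shift_tendsto_zero)
  ultimately show ?thesis
    by simp
qed

lemma cesaro_trunc_dist_tendsto:
  assumes \<mu>: "set_pmf \<mu> \<subseteq> trunc_states N" "bind_pmf \<mu> trunc_step = \<mu>"
    and s: "s \<in> trunc_states N"
  shows "cesaro (\<lambda>t. pmf (trunc_dist t) s) \<longlonglongrightarrow> pmf \<mu> s"
proof -
  define x where "x T s = cesaro (\<lambda>t. pmf (trunc_dist t) s) T - pmf \<mu> s" for T s
  note dev = cesaro_balance_deviation[OF \<mu>, where B=1]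
  have balance: "(\<lambda>T. x T s1 - (c0 * x T s0 + c1 * x T s2)) \<longlonglongrightarrow> 0"
    if "\<And>D. set_pmf D \<subseteq> trunc_states N \<Longrightarrow>
          pmf (bind_pmf D trunc_step) s1 = c0 * pmf D s0 + c1 * pmf D s2" for s1 s0 s2 c0 c1
  proof -
    have "(\<lambda>T. (cesaro (\<lambda>t. pmf (trunc_dist t) s1) T - pmf \<mu> s1)
        - (cesaro (\<lambda>t. c0 * pmf (trunc_dist t) s0 + c1 * pmf (trunc_dist t) s2) T
           - (c0 * pmf \<mu> s0 + c1 * pmf \<mu> s2))) \<longlonglongrightarrow> 0"
      by (rule dev) (use that in \<open>auto simp: pmf_le_1\<close>)
    then show ?thesis
      unfolding x_def cesaro_add cesaro_mult_left by (simp add: algebra_simps)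
  qed
  have linear: "(\<Sum>d=1..N. w d * x T (f d))
      = cesaro (\<lambda>t. \<Sum>d=1..N. w d * pmf (trunc_dist t) (f d)) T - (\<Sum>d=1..N. w d * pmf \<mu> (f d))"
    for w f T
    unfolding x_def cesaro_sum cesaro_mult_left right_diff_distrib sum_subtractf ..
  note step = pmf_bind_trunc_step
  have "(\<lambda>T. x T s) \<longlonglongrightarrow> 0"
  proof (rule approx_balance_tendsto_zero[OF _ _ _ _ _ _ _ _ s])
    show "(\<lambda>T. x T (1,0,1) - p * x T (0,0,0)) \<longlonglongrightarrow> 0"
      using balance[of "(1,0,1)" p "(0,0,0)" 0 "(0,0,0)"] step(1) by simp
    show "(\<lambda>T. x T (0,1,1) - q * x T (1,1,0)) \<longlonglongrightarrow> 0"
      using balance[of "(0,1,1)" q "(1,1,0)" 0 "(1,1,0)"] step(2) by simp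
    show "(\<lambda>T. x T (1,0,N) - rho10 * (x T (1,0,N - 1) + x T (1,0,N))) \<longlonglongrightarrow> 0"
      using balance[of "(1,0,N)" rho10 "(1,0,N - 1)" rho10 "(1,0,N)"] step(5)
      by (simp add: distrib_left)
    show "(\<lambda>T. x T (0,1,N) - rho01 * (x T (0,1,N - 1) + x T (0,1,N))) \<longlonglongrightarrow> 0"
      using balance[of "(0,1,N)" rho01 "(0,1,N - 1)" rho01 "(0,1,N)"] step(6)
      by (simp add: distrib_left)
    fix e assume e: "1 \<le> e" "Suc e < N"
    show "(\<lambda>T. x T (1,0,Suc e) - (1 - q) * tau10 e * x T (1,0,e)) \<longlonglongrightarrow> 0"
      using balance[of "(1,0,Suc e)" "(1 - q) * tau10 e" "(1,0,e)" 0 "(1,0,e)"] step(3)[OF _ e]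
      by simp
    show "(\<lambda>T. x T (0,1,Suc e) - (1 - p) * tau01 e * x T (0,1,e)) \<longlonglongrightarrow> 0"
      using balance[of "(0,1,Suc e)" "(1 - p) * tau01 e" "(0,1,e)" 0 "(0,1,e)"] step(4)[OF _ e]
      by simp
  next
    define A :: "state pmf \<Rightarrow> real" where "A D = (\<Sum>d=1..N. (1 - q) * (1 - tau10 d) * pmf D (1,0,d))" for D
    define B :: "state pmf \<Rightarrow> real" where "B D = (\<Sum>d=1..N. (1 - p) * (1 - tau01 d) * pmf D (0,1,d))" for D
    have "(\<lambda>T. (cesaro (\<lambda>t. est0_mass (trunc_dist t)) T - est0_mass \<mu>)
        - (cesaro (\<lambda>t. est0_mass (trunc_dist t) - A (trunc_dist t) + B (trunc_dist t)) T
           - (est0_mass \<mu> - A \<mu> + B \<mu>))) \<longlonglongrightarrow> 0"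
      by (rule dev) (simp_all add: A_def B_def est0_mass_bind_trunc_step est0_mass_bounds)
    moreover have "(\<Sum>d=1..N. (1 - q) * (1 - tau10 d) * x T (1,0,d))
                   - (\<Sum>d=1..N. (1 - p) * (1 - tau01 d) * x T (0,1,d))
        = (cesaro (\<lambda>t. est0_mass (trunc_dist t)) T - est0_mass \<mu>)
        - (cesaro (\<lambda>t. est0_mass (trunc_dist t) - A (trunc_dist t) + B (trunc_dist t)) T
           - (est0_mass \<mu> - A \<mu> + B \<mu>))" for T
      unfolding linear cesaro_add cesaro_diff A_def B_def by linarith
    ultimately show "(\<lambda>T. (\<Sum>d=1..N. (1 - q) * (1 - tau10 d) * x T (1,0,d))
                   - (\<Sum>d=1..N. (1 - p) * (1 - tau01 d) * x T (0,1,d))) \<longlonglongrightarrow> 0"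
      by simp
  next
    have "x T (0,0,0) + x T (1,1,0) + (\<Sum>d=1..N. x T (1,0,d)) + (\<Sum>d=1..N. x T (0,1,d)) = 0"
      if "0 < T" for T
    proof -
      have "x T (0,0,0) + x T (1,1,0) + (\<Sum>d=1..N. x T (1,0,d)) + (\<Sum>d=1..N. x T (0,1,d))
          = (\<Sum>s\<in>trunc_states N. x T s)"
        unfolding sum_trunc_states ..
      also have "\<dots> = cesaro (\<lambda>t. \<Sum>s\<in>trunc_states N. pmf (trunc_dist t) s) T
          - (\<Sum>s\<in>trunc_states N. pmf \<mu> s)"
        unfolding x_def cesaro_sum sum_subtractf ..
      also have "\<dots> = 0"
        using that \<mu>(1) set_pmf_trunc_dist
        by (simp add: sum_pmf_eq_1[OF finite_trunc_states] cesaro_const)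
      finally show ?thesis .
    qed
    then show "(\<lambda>T. x T (0,0,0) + x T (1,1,0) + (\<Sum>d=1..N. x T (1,0,d)) + (\<Sum>d=1..N. x T (0,1,d)))
        \<longlonglongrightarrow> 0"
      by (intro tendsto_eventually eventually_sequentiallyI[of 1]) auto
  qed
  then show ?thesis
    unfolding x_def by (rule LIM_zero_cancel)
qed

lemma trunc_stationary_unique:
  assumes "set_pmf \<mu>1 \<subseteq> trunc_states N" "bind_pmf \<mu>1 trunc_step = \<mu>1"
    and "set_pmf \<mu>2 \<subseteq> trunc_states N" "bind_pmf \<mu>2 trunc_step = \<mu>2"
  shows "\<mu>1 = \<mu>2"
proof (rule pmf_eqI)
  fix s
  show "pmf \<mu>1 s = pmf \<mu>2 s"
  proof (cases "s \<in> trunc_states N")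
    case True
    show ?thesis
      using LIMSEQ_unique[OF cesaro_trunc_dist_tendsto[OF assms(1,2) True]
          cesaro_trunc_dist_tendsto[OF assms(3,4) True]] .
  next
    case False
    then have "s \<notin> set_pmf \<mu>1" "s \<notin> set_pmf \<mu>2"
      using assms by auto
    then show ?thesis
      by (simp add: set_pmf_eq)
  qed
qed

lemma pmf_trunc_stationary_unsync:
  assumes \<mu>: "set_pmf \<mu> \<subseteq> trunc_states N" "bind_pmf \<mu> trunc_step = \<mu>" and d: "1 \<le> d" "d < N"
  shows "pmf \<mu> (1,0,d) = weight10 d * pmf \<mu> (0,0,0)"
    and "pmf \<mu> (0,1,d) = weight01 d * pmf \<mu> (1,1,0)"
proof -
  have "pmf \<mu> (1,0,d) = weight10 d * pmf \<mu> (0,0,0) \<and> pmf \<mu> (0,1,d) = weight01 d * pmf \<mu> (1,1,0)"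
    using d
  proof (induction d rule: nat_induct_at_least)
    case base
    then show ?case
      using pmf_bind_trunc_step(1,2)[OF \<mu>(1)] \<mu>(2) weight_rec(1,2) by simp
  next
    case (Suc e)
    then show ?case
      using pmf_bind_trunc_step(3,4)[OF \<mu>(1), of e] \<mu>(2) weight_rec(3,4)[of e] by simp
  qed
  then show "pmf \<mu> (1,0,d) = weight10 d * pmf \<mu> (0,0,0)" "pmf \<mu> (0,1,d) = weight01 d * pmf \<mu> (1,1,0)"
    by simp_all
qed

lemma pmf_trunc_stationary_top:
  assumes "set_pmf \<mu> \<subseteq> trunc_states N" "bind_pmf \<mu> trunc_step = \<mu>"
  shows "pmf \<mu> (1,0,N) = rho10 / (1 - rho10) * pmf \<mu> (1,0,N - 1)"
    and "pmf \<mu> (0,1,N) = rho01 / (1 - rho01) * pmf \<mu> (0,1,N - 1)"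
proof -
  have "pmf \<mu> (1,0,N) = rho10 * (pmf \<mu> (1,0,N - 1) + pmf \<mu> (1,0,N))"
    "pmf \<mu> (0,1,N) = rho01 * (pmf \<mu> (0,1,N - 1) + pmf \<mu> (0,1,N))"
    using pmf_bind_trunc_step(5,6)[OF assms(1)] assms(2) by simp_all
  then show "pmf \<mu> (1,0,N) = rho10 / (1 - rho10) * pmf \<mu> (1,0,N - 1)"
    "pmf \<mu> (0,1,N) = rho01 / (1 - rho01) * pmf \<mu> (0,1,N - 1)"
    using rho_bounds by (simp_all add: field_simps)
qed

section \<open>Lumping the original chain\<close>

definition orig_dist :: "nat \<Rightarrow> state pmf" where
  "orig_dist t = state_dist (orig_kernel p q ps) pol t"

lemma orig_dist_Suc: "orig_dist (Suc t) = bind_pmf (orig_dist t) orig_step"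
  by (simp add: orig_dist_def orig_step_def[abs_def])

lemma set_pmf_orig_dist: "set_pmf (orig_dist t) \<subseteq> orig_states"
proof (induction t)
  case 0
  then show ?case by (simp add: orig_dist_def orig_states_def)
next
  case (Suc t)
  then show ?case
    unfolding orig_dist_Suc set_bind_pmf using set_pmf_orig_step by blast
qed

lemma finite_set_pmf_orig_dist: "finite (set_pmf (orig_dist t))"
proof (induction t)
  case 0
  then show ?case by (simp add: orig_dist_def)
next
  case (Suc t)
  then show ?case
    by (simp add: orig_dist_Suc orig_step_def orig_kernel_def finite_set_pmf_step_kernel)
qed

lemma expectation_orig_dist:
  fixes h :: "state \<Rightarrow> real"
  shows "measure_pmf.expectation (orig_dist t) h = (\<Sum>s\<in>set_pmf (orig_dist t). h s * pmf (orig_dist t) s)"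
  by (rule integral_measure_pmf_real) (auto simp: finite_set_pmf_orig_dist)

lemma expectation_orig_dist_Suc:
  fixes h :: "state \<Rightarrow> real"
  shows "measure_pmf.expectation (orig_dist (Suc t)) h
       = measure_pmf.expectation (orig_dist t) (\<lambda>s. measure_pmf.expectation (orig_step s) h)"
  unfolding orig_dist_Suc
  by (subst pmf_expectation_bind[where A="set_pmf (orig_dist t)"])
     (auto simp: finite_set_pmf_orig_dist orig_step_def orig_kernel_def finite_set_pmf_step_kernel
       expectation_orig_dist mult.commute)

abbreviation cap :: "state \<Rightarrow> state" where
  "cap \<equiv> cap_age N"

lemma trunc_step_cap: "trunc_step (cap s) = map_pmf cap (orig_step s)"
  unfolding trunc_step_def orig_step_def using trunc_kernel_cap_age[OF N_above] .

lemma trunc_dist_eq_map_orig_dist: "trunc_dist t = map_pmf cap (orig_dist t)"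
proof (induction t)
  case 0
  then show ?case by (simp add: trunc_dist_def orig_dist_def cap_age_def)
next
  case (Suc t)
  show ?case
    unfolding trunc_dist_Suc orig_dist_Suc Suc.IH bind_map_pmf map_bind_pmf trunc_step_cap[symmetric] ..
qed

lemma map_cap_stationary:
  assumes "set_pmf \<nu> \<subseteq> orig_states" "bind_pmf \<nu> orig_step = \<nu>"
  shows "set_pmf (map_pmf cap \<nu>) \<subseteq> trunc_states N"
    and "bind_pmf (map_pmf cap \<nu>) trunc_step = map_pmf cap \<nu>"
proof -
  show "set_pmf (map_pmf cap \<nu>) \<subseteq> trunc_states N"
    using assms(1) cap_age_in_trunc_states N_ge by auto
  have "bind_pmf (map_pmf cap \<nu>) trunc_step = map_pmf cap (bind_pmf \<nu> orig_step)"
    unfolding bind_map_pmf map_bind_pmf trunc_step_cap by (simp add: comp_def)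
  then show "bind_pmf (map_pmf cap \<nu>) trunc_step = map_pmf cap \<nu>"
    using assms(2) by simp
qed

lemma pmf_map_cap_below: "d < N \<Longrightarrow> pmf (map_pmf cap \<nu>) (x, xh, d) = pmf \<nu> (x, xh, d)"
proof -
  assume "d < N"
  then have "cap -` {(x, xh, d)} = {(x, xh, d)}"
    by (auto simp: cap_age_def min_def split: if_splits)
  then show ?thesis
    by (simp add: pmf_map measure_pmf_single)
qed

section \<open>Average cost\<close>

definition excess10 :: "state \<Rightarrow> real" where
  "excess10 s = (case s of (x, xh, d) \<Rightarrow> if x = 1 \<and> xh = 0 then real (d - N) else 0)"

definition excess01 :: "state \<Rightarrow> real" where
  "excess01 s = (case s of (x, xh, d) \<Rightarrow> if x = 0 \<and> xh = 1 then real (d - N) else 0)"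

lemma state_cost_cap: "state_cost \<beta> s = state_cost \<beta> (cap s) + \<beta> * excess10 s + (1 - \<beta>) * excess01 s"
proof -
  obtain x xh d where s: "s = (x, xh, d)"
    by (cases s)
  have "real d = real (min d N) + real (d - N)"
    by simp
  then show ?thesis
    unfolding s by (simp add: cap_age_def state_cost_def excess10_def excess01_def algebra_simps)
qed

text \<open>An excess age survives one step with probability rho (source stays put and no refresh,
  since N lies above both thresholds) and grows by one; it is born from the capped top state.\<close>
lemma expectation_orig_step_excess:
  assumes "s \<in> orig_states"
  shows "measure_pmf.expectation (orig_step s) excess10 = rho10 * (excess10 s + of_bool (cap s = (1,0,N)))"
    and "measure_pmf.expectation (orig_step s) excess01 = rho01 * (excess01 s + of_bool (cap s = (0,1,N)))"
proof -
  have Suc_excess: "real (Suc d - N) = real (d - N) + of_bool (N \<le> d)" for d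
    by (auto simp: Suc_diff_le)
  have cap_top: "(min d N = N) = (N \<le> d)" for d
    by auto
  consider (sync0) "s = (0,0,0)" | (sync1) "s = (1,1,0)" | (unsync10) d where "s = (1,0,d)"
    | (unsync01) d where "s = (0,1,d)"
    using assms unfolding orig_states_def by auto
  then have "measure_pmf.expectation (orig_step s) excess10 = rho10 * (excess10 s + of_bool (cap s = (1,0,N)))
    \<and> measure_pmf.expectation (orig_step s) excess01 = rho01 * (excess01 s + of_bool (cap s = (0,1,N)))"
  proof cases
    case sync0
    show ?thesis
      unfolding sync0 orig_step_eq expectation_step_kernel_cases using N_ge
      by (simp add: excess10_def excess01_def cap_age_def)
  next
    case sync1
    show ?thesis
      unfolding sync1 orig_step_eq expectation_step_kernel_cases using N_ge
      by (simp add: excess10_def excess01_def cap_age_def)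
  next
    case (unsync10 d)
    show ?thesis
      unfolding unsync10 orig_step_eq expectation_step_kernel_cases using N_ge
      by (auto simp: excess10_def excess01_def cap_age_def cap_top Suc_excess tau10_def rho10_def)
  next
    case (unsync01 d)
    show ?thesis
      unfolding unsync01 orig_step_eq expectation_step_kernel_cases using N_ge
      by (auto simp: excess10_def excess01_def cap_age_def cap_top Suc_excess tau01_def rho01_def)
  qed
  then show "measure_pmf.expectation (orig_step s) excess10 = rho10 * (excess10 s + of_bool (cap s = (1,0,N)))"
    "measure_pmf.expectation (orig_step s) excess01 = rho01 * (excess01 s + of_bool (cap s = (0,1,N)))"
    by simp_all
qed

lemma expectation_orig_dist_excess:
  "measure_pmf.expectation (orig_dist (Suc t)) excess10
     = rho10 * (measure_pmf.expectation (orig_dist t) excess10 + pmf (trunc_dist t) (1,0,N))"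
  "measure_pmf.expectation (orig_dist (Suc t)) excess01
     = rho01 * (measure_pmf.expectation (orig_dist t) excess01 + pmf (trunc_dist t) (0,1,N))"
proof -
  have pmf_top: "pmf (trunc_dist t) s0 = (\<Sum>s\<in>set_pmf (orig_dist t). of_bool (cap s = s0) * pmf (orig_dist t) s)"
    for s0
    unfolding trunc_dist_eq_map_orig_dist pmf_eq_expectation_indicator[of "map_pmf cap (orig_dist t)"]
      integral_map_pmf expectation_orig_dist by (simp add: of_bool_def)
  have "measure_pmf.expectation (orig_dist (Suc t)) h
      = r * (measure_pmf.expectation (orig_dist t) h + pmf (trunc_dist t) s0)"
    if "\<And>s. s \<in> orig_states \<Longrightarrow> measure_pmf.expectation (orig_step s) h = r * (h s + of_bool (cap s = s0))"
    for h r s0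
  proof -
    have "measure_pmf.expectation (orig_dist (Suc t)) h
        = (\<Sum>s\<in>set_pmf (orig_dist t). r * (h s + of_bool (cap s = s0)) * pmf (orig_dist t) s)"
      unfolding expectation_orig_dist_Suc unfolding expectation_orig_dist
    proof (intro sum.cong refl)
      fix s
      assume "s \<in> set_pmf (orig_dist t)"
      then have "s \<in> orig_states"
        using set_pmf_orig_dist by blast
      then show "measure_pmf.expectation (orig_step s) h * pmf (orig_dist t) s
          = r * (h s + of_bool (cap s = s0)) * pmf (orig_dist t) s"
        using that by simp
    qed
    then show ?thesis
      unfolding pmf_top expectation_orig_dist
      by (simp add: sum_distrib_left sum.distrib algebra_simps)
  qed
  then show "measure_pmf.expectation (orig_dist (Suc t)) excess10
     = rho10 * (measure_pmf.expectation (orig_dist t) excess10 + pmf (trunc_dist t) (1,0,N))"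
    "measure_pmf.expectation (orig_dist (Suc t)) excess01
     = rho01 * (measure_pmf.expectation (orig_dist t) excess01 + pmf (trunc_dist t) (0,1,N))"
    using expectation_orig_step_excess by blast+
qed

lemma stage_cost_orig_eq:
  "stage_cost (orig_kernel p q ps) \<beta> lam s (pol s)
     = stage_cost (trunc_kernel N p q ps) \<beta> lam (cap s) (pol (cap s))
       + \<beta> * measure_pmf.expectation (orig_step s) excess10
       + (1 - \<beta>) * measure_pmf.expectation (orig_step s) excess01"
proof -
  have integrable: "integrable (measure_pmf (orig_step s)) f" for f :: "state \<Rightarrow> real"
    unfolding orig_step_def orig_kernel_def
    by (rule integrable_measure_pmf_finite[OF finite_set_pmf_step_kernel])
  have "measure_pmf.expectation (orig_step s) (state_cost \<beta>)
      = measure_pmf.expectation (orig_step s) (\<lambda>s'. state_cost \<beta> (cap s') + \<beta> * excess10 s' + (1 - \<beta>) * excess01 s')"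
    by (rule arg_cong[where f="measure_pmf.expectation (orig_step s)"], rule ext, rule state_cost_cap)
  also have "\<dots> = measure_pmf.expectation (trunc_step (cap s)) (state_cost \<beta>)
      + \<beta> * measure_pmf.expectation (orig_step s) excess10
      + (1 - \<beta>) * measure_pmf.expectation (orig_step s) excess01"
    by (simp add: integrable trunc_step_cap)
  finally show ?thesis
    unfolding stage_cost_def trunc_step_def orig_step_def switching_policy_cap_age[OF N_above] by simp
qed

lemma expectation_stage_cost_orig_dist:
  "measure_pmf.expectation (orig_dist t) (\<lambda>s. stage_cost (orig_kernel p q ps) \<beta> lam s (pol s))
   = measure_pmf.expectation (trunc_dist t) (\<lambda>s. stage_cost (trunc_kernel N p q ps) \<beta> lam s (pol s))
   + \<beta> * measure_pmf.expectation (orig_dist (Suc t)) excess10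
   + (1 - \<beta>) * measure_pmf.expectation (orig_dist (Suc t)) excess01"
  unfolding expectation_orig_dist_Suc trunc_dist_eq_map_orig_dist integral_map_pmf
  unfolding expectation_orig_dist stage_cost_orig_eq
  by (simp add: distrib_right sum.distrib sum_distrib_left mult.assoc)

lemma avg_cost_orig_eq:
  assumes \<mu>: "set_pmf \<mu> \<subseteq> trunc_states N" "bind_pmf \<mu> trunc_step = \<mu>"
  shows "avg_cost (orig_kernel p q ps) \<beta> lam pol = avg_cost (trunc_kernel N p q ps) \<beta> lam pol
    + ereal (\<beta> * (rho10 / (1 - rho10) * pmf \<mu> (1,0,N)) + (1 - \<beta>) * (rho01 / (1 - rho01) * pmf \<mu> (0,1,N)))"
proof -
  define y where "y t = measure_pmf.expectation (orig_dist t) excess10" for t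
  define z where "z t = measure_pmf.expectation (orig_dist t) excess01" for t
  have "orig_dist 0 = return_pmf (0,0,0)"
    by (simp add: orig_dist_def)
  have top: "(1,0,N) \<in> trunc_states N" "(0,1,N) \<in> trunc_states N"
    using N_ge by (auto simp: trunc_states_def)
  have "cesaro (\<lambda>t. y (Suc t)) \<longlonglongrightarrow> rho10 / (1 - rho10) * pmf \<mu> (1,0,N)"
    by (rule cesaro_linear_filter_tendsto[where v="\<lambda>t. pmf (trunc_dist t) (1,0,N)"])
      (use rho_bounds cesaro_trunc_dist_tendsto[OF \<mu> top(1)] in
        \<open>auto simp: y_def \<open>orig_dist 0 = _\<close> excess10_def expectation_orig_dist_excess pmf_le_1\<close>)
  moreover have "cesaro (\<lambda>t. z (Suc t)) \<longlonglongrightarrow> rho01 / (1 - rho01) * pmf \<mu> (0,1,N)"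
    by (rule cesaro_linear_filter_tendsto[where v="\<lambda>t. pmf (trunc_dist t) (0,1,N)"])
      (use rho_bounds cesaro_trunc_dist_tendsto[OF \<mu> top(2)] in
        \<open>auto simp: z_def \<open>orig_dist 0 = _\<close> excess01_def expectation_orig_dist_excess pmf_le_1\<close>)
  ultimately have "(\<lambda>T. ereal (\<beta> * cesaro (\<lambda>t. y (Suc t)) T + (1 - \<beta>) * cesaro (\<lambda>t. z (Suc t)) T))
      \<longlonglongrightarrow> ereal (\<beta> * (rho10 / (1 - rho10) * pmf \<mu> (1,0,N)) + (1 - \<beta>) * (rho01 / (1 - rho01) * pmf \<mu> (0,1,N)))"
    by (intro tendsto_intros)
  then have "limsup (\<lambda>T. ereal (\<beta> * cesaro (\<lambda>t. y (Suc t)) T + (1 - \<beta>) * cesaro (\<lambda>t. z (Suc t)) T)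
      + ereal (cesaro (\<lambda>t. measure_pmf.expectation (trunc_dist t)
                              (\<lambda>s. stage_cost (trunc_kernel N p q ps) \<beta> lam s (pol s))) T))
    = ereal (\<beta> * (rho10 / (1 - rho10) * pmf \<mu> (1,0,N)) + (1 - \<beta>) * (rho01 / (1 - rho01) * pmf \<mu> (0,1,N)))
      + avg_cost (trunc_kernel N p q ps) \<beta> lam pol"
    unfolding avg_cost_eq_limsup_cesaro trunc_dist_def by (rule ereal_limsup_lim_add) auto
  then show ?thesis
    unfolding avg_cost_eq_limsup_cesaro orig_dist_def[symmetric] expectation_stage_cost_orig_dist
      cesaro_add cesaro_mult_left y_def[symmetric] z_def[symmetric]
    by (simp add: ac_simps)
qed

lemma overflow_closed_form:
  "w * (rho10 / (1 - rho10) * (rho10 / (1 - rho10) * (weight10 (N - 1) * c)))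
     = w * c * p * (1 - q) ^ N * (1 - ps) ^ (N - dbar + 1) / (1 - (1 - q) * (1 - ps))\<^sup>2"
  "w * (rho01 / (1 - rho01) * (rho01 / (1 - rho01) * (weight01 (N - 1) * c)))
     = w * c * q * (1 - p) ^ N * (1 - ps) ^ (N - dund + 1) / (1 - (1 - p) * (1 - ps))\<^sup>2"
proof -
  have N_pred: "N - 1 - 1 = N - 2" "N - 1 < N"
    using N_ge by auto
  have w: "weight10 (N - 1) * c = c * p * (1 - q) ^ (N - 2) * (1 - ps) ^ (N - 1 - dbar)"
    "weight01 (N - 1) * c = c * q * (1 - p) ^ (N - 2) * (1 - ps) ^ (N - 1 - dund)"
    using N_pred by (simp_all add: weight10_def weight01_def)
  have ne: "(1 - q) * (1 - ps) \<noteq> 1" "(1 - p) * (1 - ps) \<noteq> 1"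
    using rho_bounds unfolding rho10_def rho01_def by auto
  show
    "w * (rho10 / (1 - rho10) * (rho10 / (1 - rho10) * (weight10 (N - 1) * c)))
       = w * c * p * (1 - q) ^ N * (1 - ps) ^ (N - dbar + 1) / (1 - (1 - q) * (1 - ps))\<^sup>2"
    "w * (rho01 / (1 - rho01) * (rho01 / (1 - rho01) * (weight01 (N - 1) * c)))
       = w * c * q * (1 - p) ^ N * (1 - ps) ^ (N - dund + 1) / (1 - (1 - p) * (1 - ps))\<^sup>2"
    unfolding rho10_def rho01_def w
      tail_weight_identity[OF N_ge(1,2) ne(1)] tail_weight_identity[OF N_ge(1,3) ne(2)]
    by (simp_all add: mult.assoc)
qed

end

theorem proposition5:
  fixes p q ps \<beta> lam :: real and dbar dund N :: nat and \<nu> \<nu>N :: "state pmf"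
  assumes "0 < p" "p < 1" "0 < q" "q < 1" "0 < ps" "ps \<le> 1"
    and "0 \<le> \<beta>" "\<beta> \<le> 1" "0 \<le> lam"
    and "1 \<le> dbar" "1 \<le> dund" "N > max dbar dund"
    and "stationary_dist (orig_kernel p q ps) (switching_policy dbar dund) orig_states \<nu>"
    and "stationary_dist (trunc_kernel N p q ps) (switching_policy dbar dund) (trunc_states N) \<nu>N"
  shows "(\<forall>s \<in> trunc_states N - {(1,0,N), (0,1,N)}. pmf \<nu>N s = pmf \<nu> s)
    \<and> pmf \<nu>N (1,0,N) = ((1-q)*(1-ps)) / (1 - (1-q)*(1-ps)) * pmf \<nu> (1,0,N-1)
    \<and> pmf \<nu>N (0,1,N) = ((1-p)*(1-ps)) / (1 - (1-p)*(1-ps)) * pmf \<nu> (0,1,N-1)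
    \<and> avg_cost (trunc_kernel N p q ps) \<beta> lam (switching_policy dbar dund)
      = avg_cost (orig_kernel p q ps) \<beta> lam (switching_policy dbar dund)
        - ereal (\<beta> * pmf \<nu> (0,0,0) * p * (1-q)^N * (1-ps)^(N - dbar + 1)
                   / (1 - (1-q)*(1-ps))^2
                 + (1-\<beta>) * pmf \<nu> (1,1,0) * q * (1-p)^N * (1-ps)^(N - dund + 1)
                   / (1 - (1-p)*(1-ps))^2)"
proof -
  interpret switching_system p q ps dbar dund N
    by unfold_locales (use assms in auto)
  have \<nu>: "set_pmf \<nu> \<subseteq> orig_states" "bind_pmf \<nu> orig_step = \<nu>"
    using assms(13) unfolding stationary_dist_def orig_step_def[abs_def] by auto
  have \<nu>N: "set_pmf \<nu>N \<subseteq> trunc_states N" "bind_pmf \<nu>N trunc_step = \<nu>N"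
    using assms(14) unfolding stationary_dist_def trunc_step_def[abs_def] by auto
  have below: "pmf \<nu>N (x, xh, d) = pmf \<nu> (x, xh, d)" if "d < N" for x xh d
    using trunc_stationary_unique[OF \<nu>N map_cap_stationary[OF \<nu>]] pmf_map_cap_below[OF that] by simp
  have "N - 1 < N" "1 \<le> N - 1"
    using N_ge by auto
  note tail = pmf_trunc_stationary_unsync[OF \<nu>N this(2,1), unfolded below[OF this(1)]]
  note top = pmf_trunc_stationary_top[OF \<nu>N, unfolded below[OF \<open>N - 1 < N\<close>]]
  have "\<forall>s \<in> trunc_states N - {(1,0,N), (0,1,N)}. pmf \<nu>N s = pmf \<nu> s"
    using N_ge unfolding trunc_states_def by (auto intro!: below)
  moreover have "avg_cost (trunc_kernel N p q ps) \<beta> lam pol = avg_cost (orig_kernel p q ps) \<beta> lam pol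
    - ereal (\<beta> * (rho10 / (1 - rho10) * pmf \<nu>N (1,0,N)) + (1 - \<beta>) * (rho01 / (1 - rho01) * pmf \<nu>N (0,1,N)))"
    unfolding avg_cost_orig_eq[OF \<nu>N] by (cases "avg_cost (trunc_kernel N p q ps) \<beta> lam pol") auto
  ultimately show ?thesis
    unfolding top tail overflow_closed_form using N_ge by (simp add: rho10_def rho01_def below)
qed

end
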